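(* Let $H$ be an $N\times N$ Hermitian matrix with simple eigenvalues $\mu_1,\dots,\mu_N$ and associated unit eigenvectors $u_1,\dots,u_N$, let $v\in\mathbb{C}^N$ be a unit vector, and let $G_t := H + i t\, vv^*$ for $t\ge0$. Let $\lambda_1(t),\dots,\lambda_N(t)$ be the eigenvalues of $G_t$, indexed so that they form continuous trajectories with initial condition $\lambda_j(0)=\mu_j$. Then $$\lambda_j'(0) = i\,|v^*u_j|^2 \quad \text{for all } j,$$ and for every $t>0$ at which the eigenvalues $\lambda_1(t),\dots,\lambda_N(t)$ are distinct, $$\lambda_j'(t) = \frac{i\,\Im \lambda_j(t)}{t}\prod_{k\neq j}\left(1 + \frac{2i\,\Im\lambda_k(t)}{\lambda_j(t)-\lambda_k(t)}\right) \quad \text{for all } j.$$ *)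

theory Defs
  imports "HOL-Analysis.Analysis"
begin

definition cadjoint :: "complex^'m^'n \<Rightarrow> complex^'n^'m" where
  "cadjoint A = (\<chi> i j. cnj (A $ j $ i))"

definition hermitian :: "complex^'n^'n \<Rightarrow> bool" where
  "hermitian A \<longleftrightarrow> cadjoint A = A"

definition cinner :: "complex^'n \<Rightarrow> complex^'n \<Rightarrow> complex" where
  "cinner v u = (\<Sum>i\<in>UNIV. cnj (v $ i) * u $ i)"

definition outer :: "complex^'n \<Rightarrow> complex^'n^'n" where
  "outer v = (\<chi> a b. v $ a * cnj (v $ b))"

definition charpoly_at :: "complex^'n^'n \<Rightarrow> complex \<Rightarrow> complex" where
  "charpoly_at A x = det (mat x - A)"

end

theory Submission
  imports Defs
begin

text \<open>
  In the orthonormal eigenbasis of \<open>H\<close> the matrix \<open>x - G\<^sub>t\<close> is diagonal plus rank one, so the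
  matrix determinant lemma gives \<open>det (x - G\<^sub>t) = P x + t Q x\<close> with
  \<open>P x = \<Prod>\<^sub>k (x - \<mu>\<^sub>k)\<close> and \<open>Q x = -i \<Sum>\<^sub>m |v\<^sup>* u\<^sub>m|\<^sup>2 \<Prod>\<^sub>k\<^sub>\<noteq>\<^sub>m (x - \<mu>\<^sub>k)\<close>.
  A simple root \<open>\<lambda>\<^sub>j\<close> of the pencil \<open>P + t Q\<close> moves with velocity
  \<open>-Q(\<lambda>\<^sub>j) / \<Prod>\<^sub>k\<^sub>\<noteq>\<^sub>j (\<lambda>\<^sub>j - \<lambda>\<^sub>k)\<close>, the denominator being the derivative of
  \<open>P + t Q\<close> at \<open>\<lambda>\<^sub>j\<close>; at \<open>t = 0\<close> only the term \<open>m = j\<close> of \<open>Q\<close> survives.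
  For \<open>t > 0\<close>, \<open>P\<close> has real and \<open>Q\<close> imaginary coefficients, so \<open>P - t Q\<close> has the roots
  \<open>cnj \<lambda>\<^sub>k\<close>; evaluating it at \<open>\<lambda>\<^sub>j\<close> gives \<open>-2t Q(\<lambda>\<^sub>j) = \<Prod>\<^sub>k (\<lambda>\<^sub>j - cnj \<lambda>\<^sub>k)\<close>,
  and dividing by \<open>\<Prod>\<^sub>k\<^sub>\<noteq>\<^sub>j (\<lambda>\<^sub>j - \<lambda>\<^sub>k)\<close> yields the product formula.
\<close>

lemma det_add_rank_one_rows:
  fixes A :: "'a::comm_ring_1^'n^'n" and z :: "'a^'n"
  shows "det (\<chi> i. if i \<in> T then A$i + c i *s z else A$i) =
         det A + (\<Sum>m\<in>T. c m * det (\<chi> i. if i = m then z else A$i))"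
proof (induction T arbitrary: A rule: infinite_finite_induct)
  case (infinite T) then show ?case by simp
next
  case empty then show ?case by (simp add: vec_lambda_eta)
next
  case (insert n T)
  define B where "B X = (\<chi> i. if i \<in> T then X$i + c i *s z else X$i)" for X
  define A' where "A' = (\<chi> i. if i = n then z else A$i)"
  have split: "det (\<chi> i. if i \<in> insert n T then A$i + c i *s z else A$i)
     = det (\<chi> i. if i = n then A$n else B A $ i) + det (\<chi> i. if i = n then c n *s z else B A $ i)"
  proof -
    have "(\<chi> i. if i \<in> insert n T then A$i + c i *s z else A$i)
       = (\<chi> i. if i = n then A$n + c n *s z else B A $ i)"
      unfolding B_def by (rule Cart_lambda_cong) auto
    then show ?thesis using det_row_add[of n "\<lambda>_. A$n" "\<lambda>_. c n *s z"] by simp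
  qed
  have "(\<chi> i. if i = n then A$n else B A $ i) = B A"
    unfolding B_def by (rule Cart_lambda_cong) (use insert in auto)
  moreover have "det (\<chi> i. if i = n then c n *s z else B A $ i) = c n * det (B A')"
  proof -
    have "(\<chi> i. if i = n then z else B A $ i) = B A'"
      unfolding A'_def B_def by (rule Cart_lambda_cong) (use insert in auto)
    then show ?thesis using det_row_mul[of n "c n" "\<lambda>_. z"] by simp
  qed
  moreover have "det (B A') = det A'"
  proof -
    have "det (\<chi> i. if i = m then z else A'$i) = 0" if "m \<in> T" for m
    proof (rule det_identical_rows[of m n])
      show "m \<noteq> n" using that insert by auto
      then show "row m (\<chi> i. if i = m then z else A'$i) = row n (\<chi> i. if i = m then z else A'$i)"
        by (simp add: row_def A'_def vec_lambda_eta)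
    qed
    then show ?thesis using insert.IH[of A'] unfolding B_def by simp
  qed
  ultimately show ?case
    using split insert by (simp add: insert.IH[of A, folded B_def] A'_def algebra_simps)
qed

lemma det_diagonal_replace_row:
  fixes d :: "'n::finite \<Rightarrow> 'a::{idom, ring_char_0}" and z :: "'a^'n"
  shows "det (\<chi> i. if i = m then z else (\<chi> j. if i = j then d i else 0))
         = z$m * (\<Prod>k\<in>UNIV-{m}. d k)"
proof -
  have zs: "z = (\<Sum>b\<in>UNIV. (\<chi> j. if b = j then z$b else 0))"
    by (simp add: vec_eq_iff sum_component)
  have "det (\<chi> i. if i = m then z else (\<chi> j. if i = j then d i else 0))
     = (\<Sum>b\<in>UNIV. det (\<chi> i. if i = m then (\<chi> j. if b = j then z$b else 0)
                               else (\<chi> j. if i = j then d i else 0)))"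
    by (subst zs, rule det_linear_row_sum) simp
  also have "\<dots> = det (\<chi> i. if i = m then (\<chi> j. if m = j then z$m else 0)
                               else (\<chi> j. if i = j then d i else 0))"
  proof -
    have "det (\<chi> i. if i = m then (\<chi> j. if b = j then z$b else 0)
                   else (\<chi> j. if i = j then d i else 0)) = 0" if "b \<noteq> m" for b
      by (rule det_zero_column(1)[of m]) (use that in \<open>auto simp: column_def vec_eq_iff\<close>)
    then show ?thesis by (subst sum.remove[of _ m]) auto
  qed
  also have "\<dots> = (\<Prod>i\<in>UNIV. if i = m then z$m else d i)"
    by (subst det_diagonal) (auto intro!: prod.cong)
  also have "\<dots> = z$m * (\<Prod>k\<in>UNIV-{m}. d k)"
    by (subst prod.remove[of _ m]) (auto intro!: prod.cong)
  finally show ?thesis .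
qed

lemma det_diagonal_add_rank_one:
  fixes d a b :: "'n::finite \<Rightarrow> 'a::{idom, ring_char_0}"
  shows "det (\<chi> i j. (if i = j then d i else 0) + a i * b j)
         = (\<Prod>k\<in>UNIV. d k) + (\<Sum>m\<in>UNIV. a m * b m * (\<Prod>k\<in>UNIV-{m}. d k))"
proof -
  define D :: "'a^'n^'n" where "D = (\<chi> i j. if i = j then d i else 0)"
  have diag: "det D = (\<Prod>k\<in>UNIV. d k)"
    unfolding D_def by (subst det_diagonal) auto
  have replaced: "det (\<chi> i. if i = m then vec_lambda b else D$i) = b m * (\<Prod>k\<in>UNIV-{m}. d k)" for m
  proof -
    have "(\<chi> i. if i = m then vec_lambda b else D$i)
          = (\<chi> i. if i = m then vec_lambda b else (\<chi> j. if i = j then d i else 0))"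
      by (rule Cart_lambda_cong) (simp add: D_def)
    then show ?thesis
      using det_diagonal_replace_row[of m "vec_lambda b" d] by simp
  qed
  have "det (\<chi> i j. (if i = j then d i else 0) + a i * b j)
        = det (\<chi> i. if i \<in> UNIV then D$i + a i *s vec_lambda b else D$i)"
    by (rule arg_cong[where f = det]) (simp add: vec_eq_iff D_def)
  also have "\<dots> = det D + (\<Sum>m\<in>UNIV. a m * det (\<chi> i. if i = m then vec_lambda b else D$i))"
    by (rule det_add_rank_one_rows)
  finally show ?thesis
    by (simp add: diag replaced mult.assoc)
qed

lemma cinner_diff_right: "cinner a (b - c) = cinner a b - cinner a c"
  by (simp add: cinner_def algebra_simps sum_subtractf)

lemma cinner_add_right: "cinner a (b + c) = cinner a b + cinner a c"
  by (simp add: cinner_def algebra_simps sum.distrib)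

lemma cinner_scale_right: "cinner a (s *s b) = s * cinner a b"
  by (simp add: cinner_def algebra_simps sum_distrib_left)

lemma cinner_scale_left: "cinner (s *s a) b = cnj s * cinner a b"
  by (simp add: cinner_def algebra_simps sum_distrib_left)

lemma cinner_commute_cnj: "cinner a b = cnj (cinner b a)"
  by (simp add: cinner_def mult.commute)

lemma cinner_self: "cinner y y = complex_of_real ((norm y)\<^sup>2)"
proof -
  have "cinner y y = (\<Sum>i\<in>UNIV. complex_of_real ((norm (y$i))\<^sup>2))"
    by (simp only: cinner_def complex_norm_square) (simp add: mult.commute)
  also have "\<dots> = complex_of_real ((norm y)\<^sup>2)"
    by (simp add: norm_vec_def L2_set_def sum_nonneg)
  finally show ?thesis .
qed

lemma hermitian_cinner_mult_vector:
  assumes "hermitian H"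
  shows "cinner y (H *v z) = cinner (H *v y) z"
proof -
  have H: "cnj (H$b$a) = H$a$b" for a b
    using assms unfolding hermitian_def cadjoint_def by (metis vec_lambda_beta)
  have "cinner y (H *v z) = (\<Sum>a\<in>UNIV. \<Sum>b\<in>UNIV. cnj (y$a) * H$a$b * z$b)"
    by (simp add: cinner_def matrix_vector_mult_def sum_distrib_left mult.assoc)
  also have "\<dots> = (\<Sum>b\<in>UNIV. \<Sum>a\<in>UNIV. cnj (y$a) * H$a$b * z$b)"
    by (rule sum.swap)
  also have "\<dots> = cinner (H *v y) z"
    by (simp add: cinner_def matrix_vector_mult_def sum_distrib_right sum_distrib_left H
        mult.commute mult.left_commute)
  finally show ?thesis .
qed

lemma hermitian_eigenvectors_orthonormal:
  fixes H :: "complex^'n^'n" and \<mu> :: "'n \<Rightarrow> real" and u :: "'n \<Rightarrow> complex^'n"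
  assumes herm: "hermitian H" and simple: "inj \<mu>"
    and eigvec: "\<And>j. H *v u j = complex_of_real (\<mu> j) *s u j"
    and unit_u: "\<And>j. norm (u j) = 1"
  shows "cinner (u k) (u l) = (if k = l then 1 else 0)"
proof (cases "k = l")
  case True
  then show ?thesis using unit_u by (simp add: cinner_self)
next
  case False
  have "of_real (\<mu> l) * cinner (u k) (u l) = cinner (u k) (H *v u l)"
    by (simp add: eigvec cinner_scale_right)
  also have "\<dots> = cinner (H *v u k) (u l)"
    by (rule hermitian_cinner_mult_vector[OF herm])
  also have "\<dots> = of_real (\<mu> k) * cinner (u k) (u l)"
    by (simp add: eigvec cinner_scale_left)
  finally have "(of_real (\<mu> l) - of_real (\<mu> k)) * cinner (u k) (u l) = 0"
    by (simp add: algebra_simps)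
  moreover have "\<mu> l \<noteq> \<mu> k"
    using False simple by (metis injD)
  ultimately show ?thesis using False by simp
qed

lemma mat_mult_vector: "mat x *v y = x *s y"
  by (simp add: vec_eq_iff matrix_vector_mult_def mat_def if_distrib[of "\<lambda>z. z * _"] cong: if_cong)

lemma outer_mult_vector: "(\<chi> a b. c * outer v $ a $ b) *v y = (c * cinner v y) *s v"
  by (simp add: vec_eq_iff matrix_vector_mult_def outer_def cinner_def sum_distrib_left mult_ac)

lemma charpoly_at_rank_one_perturbation:
  fixes H :: "complex^'n^'n" and \<mu> :: "'n \<Rightarrow> real" and u :: "'n \<Rightarrow> complex^'n"
    and v :: "complex^'n"
  assumes herm: "hermitian H" and simple: "inj \<mu>"
    and eigvec: "\<And>j. H *v u j = complex_of_real (\<mu> j) *s u j"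
    and unit_u: "\<And>j. norm (u j) = 1"
  shows "charpoly_at (H + (\<chi> a b. c * outer v $ a $ b)) x
    = (\<Prod>k\<in>UNIV. x - complex_of_real (\<mu> k))
      - c * (\<Sum>m\<in>UNIV. complex_of_real ((cmod (cinner v (u m)))\<^sup>2)
                       * (\<Prod>k\<in>UNIV-{m}. x - complex_of_real (\<mu> k)))"
proof -
  note orth = hermitian_eigenvectors_orthonormal[OF herm simple eigvec unit_u]
  define U :: "complex^'n^'n" where "U = (\<chi> a k. u k $ a)"
  define Uh :: "complex^'n^'n" where "Uh = (\<chi> k a. cnj (u k $ a))"
  define M where "M = mat x - (H + (\<chi> a b. c * outer v $ a $ b))"
  define w where "w k = cinner (u k) v" for k
  have w_norm: "w m * cnj (w m) = complex_of_real ((cmod (cinner v (u m)))\<^sup>2)" for m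
    unfolding w_def complex_norm_square[symmetric] by (subst cinner_commute_cnj) simp
  have "Uh ** U = mat 1"
    using orth by (simp add: vec_eq_iff matrix_matrix_mult_def mat_def U_def Uh_def cinner_def)
  then have "det Uh * det U = 1"
    by (metis det_I det_mul)
  then have "det M = det (Uh ** (M ** U))"
    by (simp add: det_mul algebra_simps)
  also have "Uh ** (M ** U)
      = (\<chi> k l. (if k = l then x - of_real (\<mu> k) else 0) + (- c * w k) * cnj (w l))"
  proof -
    have "(Uh ** (M ** U))$k$l = (if k = l then x - of_real (\<mu> k) else 0) + (- c * w k) * cnj (w l)"
      for k l
    proof -
      have "(Uh ** (M ** U))$k$l = cinner (u k) (M *v u l)"
        by (simp add: matrix_matrix_mult_def matrix_vector_mult_def cinner_def U_def Uh_def
            sum_distrib_left mult.assoc)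
      also have "M *v u l = x *s u l - of_real (\<mu> l) *s u l - (c * cnj (w l)) *s v"
        unfolding M_def w_def cinner_commute_cnj[of "u l"]
        by (simp only: matrix_vector_mult_diff_rdistrib matrix_vector_mult_add_rdistrib
            mat_mult_vector outer_mult_vector eigvec) (simp add: algebra_simps)
      also have "cinner (u k) \<dots> = (x - of_real (\<mu> l)) * cinner (u k) (u l) - c * w k * cnj (w l)"
        by (simp add: cinner_diff_right cinner_add_right cinner_scale_right w_def algebra_simps)
      finally show ?thesis
        using orth[of k l] by simp
    qed
    then show ?thesis
      by (simp add: vec_eq_iff)
  qed
  also have "det \<dots> = (\<Prod>k\<in>UNIV. x - of_real (\<mu> k))
      + (\<Sum>m\<in>UNIV. (- c * w m) * cnj (w m) * (\<Prod>k\<in>UNIV-{m}. x - of_real (\<mu> k)))"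
    by (rule det_diagonal_add_rank_one)
  finally show ?thesis
    unfolding charpoly_at_def M_def[symmetric]
    by (simp add: w_norm sum_negf sum_distrib_left mult.assoc)
qed

lemma has_vector_derivative_iff_diff_quotient:
  fixes f :: "real \<Rightarrow> complex"
  shows "(f has_vector_derivative D) (at x within S) \<longleftrightarrow>
         ((\<lambda>y. (f y - f x) / of_real (y - x)) \<longlongrightarrow> D) (at x within S)"
  unfolding has_vector_derivative_complex_iff has_field_derivative_iff tendsto_complex_iff
  by (simp add: Re_divide_of_real)

lemma pencil_root_has_vector_derivative:
  fixes lam :: "real \<Rightarrow> complex" and P Q D :: "complex \<Rightarrow> complex"
  assumes roots: "\<And>s. s \<in> S \<Longrightarrow> P (lam s) + of_real s * Q (lam s) = 0"
    and factor: "\<And>y. P y + of_real t * Q y = (y - lam t) * D y"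
    and lam_cont: "continuous (at t within S) lam"
    and Q_cont: "isCont Q (lam t)" and D_cont: "isCont D (lam t)"
    and D_nz: "D (lam t) \<noteq> 0"
  shows "(lam has_vector_derivative - Q (lam t) / D (lam t)) (at t within S)"
proof -
  have lam_lim: "(lam \<longlongrightarrow> lam t) (at t within S)"
    using lam_cont by (simp add: continuous_within)
  have D_lim: "((\<lambda>s. D (lam s)) \<longlongrightarrow> D (lam t)) (at t within S)"
    by (rule isCont_tendsto_compose[OF D_cont lam_lim])
  have quotient_lim: "((\<lambda>s. - Q (lam s) / D (lam s)) \<longlongrightarrow> - Q (lam t) / D (lam t)) (at t within S)"
    by (intro tendsto_intros isCont_tendsto_compose[OF Q_cont lam_lim] D_lim D_nz)
  have "\<forall>\<^sub>F s in at t within S. D (lam s) \<noteq> 0"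
    by (rule tendsto_imp_eventually_ne[OF D_lim D_nz])
  moreover have "\<forall>\<^sub>F s in at t within S. s \<in> S \<and> s \<noteq> t"
    by (simp add: eventually_at_filter)
  ultimately have "\<forall>\<^sub>F s in at t within S. - Q (lam s) / D (lam s) = (lam s - lam t) / of_real (s - t)"
  proof eventually_elim
    case (elim s)
    have "(lam s - lam t) * D (lam s) = P (lam s) + of_real t * Q (lam s)"
      by (simp add: factor)
    also have "\<dots> = (P (lam s) + of_real s * Q (lam s)) - of_real (s - t) * Q (lam s)"
      by (simp add: algebra_simps)
    also have "\<dots> = - (of_real (s - t) * Q (lam s))"
      using roots elim by simp
    finally have "(lam s - lam t) * D (lam s) = - (of_real (s - t) * Q (lam s))" .
    with elim show ?case
      by (simp add: field_simps)
  qed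
  then show ?thesis
    unfolding has_vector_derivative_iff_diff_quotient by (rule Lim_transform_eventually[OF quotient_lim])
qed

lemma factored_pencil_root_has_vector_derivative:
  fixes lam :: "'n::finite \<Rightarrow> real \<Rightarrow> complex" and P Q :: "complex \<Rightarrow> complex"
  assumes pencil: "\<And>s y. s \<in> S \<Longrightarrow> P y + of_real s * Q y = (\<Prod>k\<in>UNIV. y - lam k s)"
    and "t \<in> S" and "continuous (at t within S) (lam j)" and "isCont Q (lam j t)"
    and simple: "\<And>k. k \<noteq> j \<Longrightarrow> lam k t \<noteq> lam j t"
  shows "(lam j has_vector_derivative - Q (lam j t) / (\<Prod>k\<in>UNIV-{j}. lam j t - lam k t))
           (at t within S)"
proof (rule pencil_root_has_vector_derivative[where P = P and D = "\<lambda>y. \<Prod>k\<in>UNIV-{j}. y - lam k t"])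
  show "P (lam j s) + of_real s * Q (lam j s) = 0" if "s \<in> S" for s
    using pencil[OF that] by (auto simp: prod_zero_iff)
  show "P y + of_real t * Q y = (y - lam j t) * (\<Prod>k\<in>UNIV-{j}. y - lam k t)" for y
    using pencil[OF \<open>t \<in> S\<close>] by (simp add: prod.remove[of _ j])
  show "(\<Prod>k\<in>UNIV-{j}. lam j t - lam k t) \<noteq> 0"
    by (auto simp: prod_zero_iff dest: simple)
qed (use assms in \<open>auto intro!: continuous_intros\<close>)

lemma sum_prod_others_at_node:
  fixes x :: "'n::finite \<Rightarrow> 'a::comm_ring_1"
  shows "(\<Sum>m\<in>UNIV. c m * (\<Prod>k\<in>UNIV-{m}. x j - x k)) = c j * (\<Prod>k\<in>UNIV-{j}. x j - x k)"
proof -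
  have vanish: "(\<Prod>k\<in>UNIV-{m}. x j - x k) = 0" if "m \<noteq> j" for m
    by (rule prod_zero) (use that in \<open>auto intro!: bexI[of _ j]\<close>)
  have "(\<Sum>m\<in>UNIV-{j}. c m * (\<Prod>k\<in>UNIV-{m}. x j - x k)) = 0"
    by (intro sum.neutral ballI) (simp add: vanish)
  then show ?thesis
    by (subst sum.remove[of _ j]) simp_all
qed

lemma diff_cnj_eq_mult:
  fixes z w :: complex
  assumes "w \<noteq> z"
  shows "z - cnj w = (z - w) * (1 + 2 * \<i> * of_real (Im w) / (z - w))"
proof -
  have "(z - w) * (1 + 2 * \<i> * of_real (Im w) / (z - w)) = (z - w) + 2 * \<i> * of_real (Im w)"
    using assms by (simp add: distrib_left)
  then show ?thesis
    using complex_diff_cnj[of w] by (simp add: algebra_simps)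
qed

lemma conj_symmetric_pencil_root_quotient:
  fixes P Q :: "complex \<Rightarrow> complex" and L :: "'n::finite \<Rightarrow> complex" and t :: real
  assumes "t \<noteq> 0"
    and P_real: "\<And>y. cnj (P (cnj y)) = P y" and Q_imag: "\<And>y. cnj (Q (cnj y)) = - Q y"
    and pencil: "\<And>y. P y + of_real t * Q y = (\<Prod>k\<in>UNIV. y - L k)"
    and simple: "\<And>k. k \<noteq> j \<Longrightarrow> L k \<noteq> L j"
  shows "- Q (L j) / (\<Prod>k\<in>UNIV-{j}. L j - L k)
         = \<i> * of_real (Im (L j) / t) *
           (\<Prod>k\<in>UNIV-{j}. 1 + 2 * \<i> * of_real (Im (L k)) / (L j - L k))"
proof -
  have conj_pencil: "P y - of_real t * Q y = (\<Prod>k\<in>UNIV. y - cnj (L k))" for y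
  proof -
    have "P y - of_real t * Q y = cnj (P (cnj y) + of_real t * Q (cnj y))"
      using P_real[of y] Q_imag[of y] by simp
    also have "\<dots> = (\<Prod>k\<in>UNIV. y - cnj (L k))"
      by (simp add: pencil)
    finally show ?thesis .
  qed
  have "P (L j) + of_real t * Q (L j) = 0"
    using pencil[of "L j"] by (auto simp: prod_zero_iff)
  then have "P (L j) = - (of_real t * Q (L j))"
    by (simp add: eq_neg_iff_add_eq_0)
  then have "- 2 * of_real t * Q (L j) = P (L j) - of_real t * Q (L j)"
    by simp
  also have "\<dots> = (\<Prod>k\<in>UNIV. L j - cnj (L k))"
    by (rule conj_pencil)
  also have "\<dots> = (L j - cnj (L j)) * (\<Prod>k\<in>UNIV-{j}. L j - cnj (L k))"
    by (subst prod.remove[of _ j]) auto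
  also have "(\<Prod>k\<in>UNIV-{j}. L j - cnj (L k))
      = (\<Prod>k\<in>UNIV-{j}. L j - L k) * (\<Prod>k\<in>UNIV-{j}. 1 + 2 * \<i> * of_real (Im (L k)) / (L j - L k))"
  proof -
    have "L j - cnj (L k) = (L j - L k) * (1 + 2 * \<i> * of_real (Im (L k)) / (L j - L k))"
      if "k \<in> UNIV - {j}" for k
      using simple[of k] that by (intro diff_cnj_eq_mult) auto
    then show ?thesis
      unfolding prod.distrib[symmetric] by (rule prod.cong[OF refl])
  qed
  finally have "- 2 * of_real t * Q (L j) = (L j - cnj (L j)) *
      ((\<Prod>k\<in>UNIV-{j}. L j - L k) * (\<Prod>k\<in>UNIV-{j}. 1 + 2 * \<i> * of_real (Im (L k)) / (L j - L k)))" .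
  moreover have "(\<Prod>k\<in>UNIV-{j}. L j - L k) \<noteq> 0"
    by (auto simp: prod_zero_iff dest: simple)
  ultimately show ?thesis
    using \<open>t \<noteq> 0\<close> by (simp add: complex_diff_cnj field_simps)
qed

theorem theorem1p5:
  fixes H :: "complex^'n^'n" and \<mu> :: "'n \<Rightarrow> real" and u :: "'n \<Rightarrow> complex^'n"
    and v :: "complex^'n" and lam :: "'n \<Rightarrow> real \<Rightarrow> complex"
    and G :: "real \<Rightarrow> complex^'n^'n"
  assumes herm: "hermitian H"
    and simple: "inj \<mu>"
    and spec_H: "\<And>x. charpoly_at H x = (\<Prod>j\<in>UNIV. x - complex_of_real (\<mu> j))"
    and eigvec: "\<And>j. H *v u j = complex_of_real (\<mu> j) *s u j"
    and unit_u: "\<And>j. norm (u j) = 1"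
    and unit_v: "norm v = 1"
    and G_def: "\<And>t. G t = H + (\<chi> a b. \<i> * complex_of_real t * outer v $ a $ b)"
    and cont: "\<And>j. continuous_on {0..} (lam j)"
    and spec_G: "\<And>t x. t \<ge> 0 \<Longrightarrow> charpoly_at (G t) x = (\<Prod>j\<in>UNIV. x - lam j t)"
    and init: "\<And>j. lam j 0 = complex_of_real (\<mu> j)"
  shows "(\<forall>j. (lam j has_vector_derivative
              (\<i> * complex_of_real ((cmod (cinner v (u j)))\<^sup>2))) (at 0 within {0..}))
       \<and> (\<forall>t>0. (\<forall>j k. j \<noteq> k \<longrightarrow> lam j t \<noteq> lam k t) \<longrightarrow>
           (\<forall>j. (lam j has_vector_derivative
              (\<i> * complex_of_real (Im (lam j t) / t) *
               (\<Prod>k\<in>UNIV - {j}. 1 + 2 * \<i> * complex_of_real (Im (lam k t)) / (lam j t - lam k t))))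
              (at t)))"
proof -
  define W where "W m = complex_of_real ((cmod (cinner v (u m)))\<^sup>2)" for m
  define P where "P y = (\<Prod>k\<in>UNIV. y - complex_of_real (\<mu> k))" for y
  define Q where "Q y = - \<i> * (\<Sum>m\<in>UNIV. W m * (\<Prod>k\<in>UNIV-{m}. y - complex_of_real (\<mu> k)))" for y
  have pencil: "P y + of_real s * Q y = (\<Prod>k\<in>UNIV. y - lam k s)" if "s \<in> {0..}" for s y
    using spec_G[of s y] that
    unfolding G_def charpoly_at_rank_one_perturbation[OF herm simple eigvec unit_u] P_def Q_def W_def
    by (simp add: algebra_simps)
  have P_real: "cnj (P (cnj y)) = P y" and Q_imag: "cnj (Q (cnj y)) = - Q y" for y
    by (simp_all add: P_def Q_def W_def)
  have Q_cont: "isCont Q y" for y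
    unfolding Q_def by (intro continuous_intros)
  have deriv: "(lam j has_vector_derivative - Q (lam j t) / (\<Prod>k\<in>UNIV-{j}. lam j t - lam k t))
                 (at t within {0..})"
    if "t \<ge> 0" and "\<And>k. k \<noteq> j \<Longrightarrow> lam k t \<noteq> lam j t" for t j
    using cont[of j] that
    by (intro factored_pencil_root_has_vector_derivative[OF pencil] Q_cont)
       (auto simp: continuous_on_eq_continuous_within)
  have "(lam j has_vector_derivative \<i> * W j) (at 0 within {0..})" for j
  proof -
    have distinct: "lam k 0 \<noteq> lam j 0" if "k \<noteq> j" for k
      using simple that by (simp add: init inj_eq)
    have "(\<Prod>k\<in>UNIV-{j}. lam j 0 - lam k 0) \<noteq> 0"
      by (auto simp: prod_zero_iff dest: distinct)
    moreover have "Q (lam j 0) = - \<i> * W j * (\<Prod>k\<in>UNIV-{j}. lam j 0 - lam k 0)"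
      by (simp add: Q_def init sum_prod_others_at_node[where x = "\<lambda>k. of_real (\<mu> k)"])
    ultimately show ?thesis
      using deriv[of 0 j] distinct by simp
  qed
  moreover have "(lam j has_vector_derivative
              (\<i> * complex_of_real (Im (lam j t) / t) *
               (\<Prod>k\<in>UNIV - {j}. 1 + 2 * \<i> * complex_of_real (Im (lam k t)) / (lam j t - lam k t))))
              (at t)"
    if "t > 0" and "\<forall>j k. j \<noteq> k \<longrightarrow> lam j t \<noteq> lam k t" for t j
    using deriv[of t j] conj_symmetric_pencil_root_quotient[of t P Q "\<lambda>k. lam k t" j]
      P_real Q_imag pencil[of t] that at_within_interior[of t "{0..}"]
    by auto
  ultimately show ?thesis
    unfolding W_def by blast
qed

end
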